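(* Every bipartite circle graph has odd chromatic number at most $98$.
   Context: A graph is a circle graph if there is a collection of chords of a circle in bijection with its vertices such that two vertices are adjacent if and only if their chords intersect. The odd chromatic number of a graph $G$ is the minimum number of colors in a proper vertex coloring of $G$ such that for every non-isolated vertex $v$ some color appears on an odd number of vertices of the open neighborhood $N(v)$. *)

theory Defs
  imports "HOL-Analysis.Analysis"
begin

definition simple_graph :: "'a set \<Rightarrow> ('a \<Rightarrow> 'a \<Rightarrow> bool) \<Rightarrow> bool" where
  "simple_graph V E \<longleftrightarrow> finite V \<and>
     (\<forall>u v. E u v \<longrightarrow> u \<in> V \<and> v \<in> V) \<and>
     (\<forall>u v. E u v \<longrightarrow> E v u) \<and> (\<forall>v. \<not> E v v)"

definition bipartite :: "'a set \<Rightarrow> ('a \<Rightarrow> 'a \<Rightarrow> bool) \<Rightarrow> bool" where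
  "bipartite V E \<longleftrightarrow> (\<exists>side :: 'a \<Rightarrow> bool. \<forall>u\<in>V. \<forall>v\<in>V. E u v \<longrightarrow> side u \<noteq> side v)"

definition circle_graph :: "'a set \<Rightarrow> ('a \<Rightarrow> 'a \<Rightarrow> bool) \<Rightarrow> bool" where
  "circle_graph V E \<longleftrightarrow> (\<exists>p q :: 'a \<Rightarrow> complex.
     (\<forall>v\<in>V. cmod (p v) = 1 \<and> cmod (q v) = 1 \<and> p v \<noteq> q v) \<and>
     inj_on (\<lambda>v. closed_segment (p v) (q v)) V \<and>
     (\<forall>u\<in>V. \<forall>v\<in>V. u \<noteq> v \<longrightarrow>
        (E u v \<longleftrightarrow> closed_segment (p u) (q u) \<inter> closed_segment (p v) (q v) \<noteq> {})))"

definition odd_coloring :: "'a set \<Rightarrow> ('a \<Rightarrow> 'a \<Rightarrow> bool) \<Rightarrow> nat \<Rightarrow> ('a \<Rightarrow> nat) \<Rightarrow> bool" where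
  "odd_coloring V E k col \<longleftrightarrow>
     (\<forall>v\<in>V. col v < k) \<and>
     (\<forall>u\<in>V. \<forall>v\<in>V. E u v \<longrightarrow> col u \<noteq> col v) \<and>
     (\<forall>v\<in>V. (\<exists>u. E v u) \<longrightarrow> (\<exists>c. odd (card {u\<in>V. E v u \<and> col u = c})))"

definition odd_chromatic_number :: "'a set \<Rightarrow> ('a \<Rightarrow> 'a \<Rightarrow> bool) \<Rightarrow> nat" where
  "odd_chromatic_number V E = (LEAST k. \<exists>col. odd_coloring V E k col)"

end

(* Split the vertices into the two sides A and B of the bipartition and read every chord as the
   interval between the arguments of its endpoints.  After pushing endpoints shared by an A-chord
   and a B-chord apart infinitesimally, two chords from different sides meet iff their intervals
   interleave, and the intervals of each side form a laminar family.  It then suffices to colour B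
   with 16 colours so that every a in A with a neighbour sees some colour an odd number of times
   (and symmetrically for A with 16 further colours): 32 colours, at most 98.

   The neighbours of a are the symmetric difference of the sets of B-intervals covering the two
   ends of a.  Such a set is a chain determined by its innermost member.  Joining, for every a,
   the innermost intervals at its two ends gives an auxiliary graph whose edges, ranked among the
   B-endpoints, form a non-crossing family; so it is 8-degenerate and has a proper colouring tau
   with values at most 8.  Colour b by tau(b) XOR tau(innermost interval around the left end of b).
   These colours telescope along a chain, so over the intervals covering a point x each bit has
   the parity of that bit in tau(innermost at x) XOR tau(nothing).  As tau differs at the two ends
   of a, some bit has odd parity over the neighbours of a, hence so does some colour class. *)

theory Submission
  imports Defs
begin

section \<open>Non-crossing families of intervals\<close>

definition crosses :: "'a::linorder \<times> 'a \<Rightarrow> 'a \<times> 'a \<Rightarrow> bool" where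
  "crosses I J \<longleftrightarrow> fst I < fst J \<and> fst J < snd I \<and> snd I < snd J"

definition interleave :: "'a::linorder \<times> 'a \<Rightarrow> 'a \<times> 'a \<Rightarrow> bool" where
  "interleave I J \<longleftrightarrow> crosses I J \<or> crosses J I"

lemma interleave_commute: "interleave I J \<longleftrightarrow> interleave J I"
  unfolding interleave_def by blast

lemma interleave_iff_exactly_one_inside:
  fixes la ra lb rb :: "'p::linorder"
  assumes "la < ra" "lb < rb" "la \<noteq> lb" "la \<noteq> rb" "ra \<noteq> lb" "ra \<noteq> rb"
  shows "interleave (la, ra) (lb, rb) \<longleftrightarrow> (la < lb \<and> lb < ra) \<noteq> (la < rb \<and> rb < ra)"
proof -
  have neq: "x < y \<or> y < x" if "x \<noteq> y" for x y :: 'p using that by auto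
  show ?thesis
    using assms(1,2) neq[OF assms(3)] neq[OF assms(4)] neq[OF assms(5)] neq[OF assms(6)]
    unfolding interleave_def crosses_def by (auto dest: less_trans)
qed

lemma noncrossing_split_point:
  fixes S :: "(nat \<times> nat) set"
  assumes span: "\<And>i j. (i, j) \<in> S \<Longrightarrow> l \<le> i \<and> i < j \<and> j \<le> r"
    and nc: "\<And>I J. I \<in> S \<Longrightarrow> J \<in> S \<Longrightarrow> \<not> crosses I J"
    and "Suc l < r"
  obtains m where "l < m" "m < r" "\<And>i j. (i, j) \<in> S - {(l, r)} \<Longrightarrow> j \<le> m \<or> m \<le> i"
proof
  define J where "J = {j. (l, j) \<in> S \<and> j < r}"
  define m where "m = Max (insert (Suc l) J)"
  have finJ: "finite J"
    unfolding J_def by (rule finite_subset[of _ "{..<r}"]) auto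
  have m_in: "m \<in> insert (Suc l) J"
    unfolding m_def using finJ by (intro Max_in) auto
  have J_le: "j \<le> m" if "j \<in> J" for j
    unfolding m_def using finJ that by simp
  have "Suc l \<le> m"
    unfolding m_def using finJ by (intro Max_ge) auto
  then show "l < m" by simp
  show "m < r"
    using m_in \<open>Suc l < r\<close> by (auto simp: J_def)
  fix i j assume ij: "(i, j) \<in> S - {(l, r)}"
  show "j \<le> m \<or> m \<le> i"
  proof (rule ccontr)
    assume inside: "\<not> (j \<le> m \<or> m \<le> i)"
    have "l \<le> i" "j \<le> r" using span ij by auto
    show False
    proof (cases "i = l")
      case True
      then have "j \<in> J" using ij \<open>j \<le> r\<close> by (auto simp: J_def)
      then show False using J_le inside by fastforce
    next
      case False
      then have "m \<in> J" using m_in inside \<open>l \<le> i\<close> by auto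
      then have "crosses (l, m) (i, j)" using False inside \<open>l \<le> i\<close> by (auto simp: crosses_def)
      then show False using nc \<open>m \<in> J\<close> ij by (auto simp: J_def)
    qed
  qed
qed

lemma card_noncrossing_in_interval:
  fixes S :: "(nat \<times> nat) set"
  assumes "\<And>i j. (i, j) \<in> S \<Longrightarrow> l \<le> i \<and> i < j \<and> j \<le> r"
    and "\<And>I J. I \<in> S \<Longrightarrow> J \<in> S \<Longrightarrow> \<not> crosses I J"
    and "l < r"
  shows "card S + 1 \<le> 2 * (r - l)"
  using assms
proof (induction "r - l" arbitrary: l r S rule: less_induct)
  case less
  have finS: "finite S"
    by (rule finite_subset[of _ "{l..r} \<times> {l..r}"]) (use less.prems(1) in fastforce)+
  show ?case
  proof (cases "r = Suc l")
    case True
    then have "S \<subseteq> {(l, r)}" using less.prems(1) by fastforce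
    then have "card S \<le> 1" using card_mono[of "{(l, r)}" S] by simp
    then show ?thesis using True by simp
  next
    case False
    then obtain m where m: "l < m" "m < r"
      and split: "\<And>i j. (i, j) \<in> S - {(l, r)} \<Longrightarrow> j \<le> m \<or> m \<le> i"
      using noncrossing_split_point[of S l r] less.prems by (metis Suc_lessI)
    define SL where "SL = {(i, j) \<in> S. j \<le> m}"
    define SR where "SR = {(i, j) \<in> S. m \<le> i}"
    have "card SL + 1 \<le> 2 * (m - l)"
      using less.prems m by (intro less.hyps) (auto simp: SL_def)
    moreover have "card SR + 1 \<le> 2 * (r - m)"
      using less.prems m by (intro less.hyps) (auto simp: SR_def)
    moreover have "card S \<le> Suc (card (SL \<union> SR))"
    proof -
      have "SL \<union> SR \<subseteq> S" by (auto simp: SL_def SR_def)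
      then have fin: "finite (SL \<union> SR)" using finS by (rule finite_subset)
      have "S \<subseteq> insert (l, r) (SL \<union> SR)"
        using split by (auto simp: SL_def SR_def)
      then have "card S \<le> card (insert (l, r) (SL \<union> SR))"
        using fin by (intro card_mono) auto
      also have "\<dots> \<le> Suc (card (SL \<union> SR))" using fin by (simp add: card_insert_if)
      finally show ?thesis .
    qed
    moreover have "card (SL \<union> SR) \<le> card SL + card SR" by (rule card_Un_le)
    ultimately show ?thesis using m by linarith
  qed
qed

lemma card_noncrossing_le:
  fixes S :: "(nat \<times> nat) set"
  assumes "\<And>i j. (i, j) \<in> S \<Longrightarrow> i < j \<and> j \<le> N"
    and "\<And>I J. I \<in> S \<Longrightarrow> J \<in> S \<Longrightarrow> \<not> crosses I J"
  shows "card S \<le> 2 * N"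
proof (cases "N = 0")
  case True
  then have "S = {}" using assms(1) by fastforce
  then show ?thesis by simp
next
  case False
  have "card S + 1 \<le> 2 * (N - 0)"
    by (rule card_noncrossing_in_interval) (use assms False in auto)
  then show ?thesis by simp
qed

definition rank :: "'a::linorder set \<Rightarrow> 'a \<Rightarrow> nat" where
  "rank P x = card {e \<in> P. e < x}"

lemma rank_mono: "finite P \<Longrightarrow> x \<le> y \<Longrightarrow> rank P x \<le> rank P y"
  unfolding rank_def by (rule card_mono) auto

lemma less_if_rank_less: "finite P \<Longrightarrow> rank P x < rank P y \<Longrightarrow> x < y"
  using rank_mono[of P y x] by (meson not_le)

lemma rank_le_card: "finite P \<Longrightarrow> rank P x \<le> card P"
  unfolding rank_def by (rule card_mono) auto

lemma less_iff_less_if_rank_eq: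
  assumes "finite P" "rank P x = rank P y" "e \<in> P"
  shows "e < x \<longleftrightarrow> e < y"
proof -
  have "rank P u < rank P v" if "u \<le> e" "e < v" for u v
  proof -
    have "{e' \<in> P. e' < u} \<subseteq> {e' \<in> P. e' < v}"
      using that by (blast intro: less_le_trans less_trans)
    moreover have "e \<in> {e' \<in> P. e' < v} - {e' \<in> P. e' < u}"
      using that \<open>e \<in> P\<close> by (simp add: not_less)
    ultimately have "{e' \<in> P. e' < u} \<subset> {e' \<in> P. e' < v}" by blast
    moreover have "finite {e' \<in> P. e' < v}" using \<open>finite P\<close> by simp
    ultimately show ?thesis unfolding rank_def by (simp add: psubset_card_mono)
  qed
  then show ?thesis using assms(2) by (metis less_irrefl not_le)
qed

section \<open>Counting, parity and greedy colouring\<close>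

lemma card_image_le_if_factors:
  assumes "finite S" and factors: "\<And>x y. x \<in> S \<Longrightarrow> y \<in> S \<Longrightarrow> g x = g y \<Longrightarrow> h x = h y"
  shows "card (h ` S) \<le> card (g ` S)"
proof -
  define \<phi> where "\<phi> k = h (SOME x. x \<in> S \<and> g x = k)" for k
  have "\<phi> (g x) = h x" if "x \<in> S" for x
  proof -
    have "(SOME y. y \<in> S \<and> g y = g x) \<in> S \<and> g (SOME y. y \<in> S \<and> g y = g x) = g x"
      using that by (intro someI[of "\<lambda>y. y \<in> S \<and> g y = g x" x]) simp
    then show ?thesis unfolding \<phi>_def using factors that by blast
  qed
  then have "h ` S = \<phi> ` g ` S" by (simp add: image_image)
  then show ?thesis using card_image_le[of "g ` S" \<phi>] \<open>finite S\<close> by simp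
qed

lemma odd_card_sym_diff:
  assumes "finite X" "finite Y"
  shows "odd (card (sym_diff X Y)) \<longleftrightarrow> odd (card X) \<noteq> odd (card Y)"
proof -
  have "card (sym_diff X Y) = card (X \<union> Y - X \<inter> Y)"
    by (rule arg_cong[where f = card]) auto
  also have "\<dots> = card (X \<union> Y) - card (X \<inter> Y)"
    using assms by (intro card_Diff_subset) auto
  moreover have "card (X \<inter> Y) \<le> card (X \<union> Y)"
    using assms by (intro card_mono) auto
  ultimately have "card (sym_diff X Y) + card (X \<inter> Y) = card (X \<union> Y)"
    by simp
  moreover have "card (X \<union> Y) + card (X \<inter> Y) = card X + card Y"
    using card_Un_Int[OF assms] by simp
  ultimately show ?thesis by presburger
qed

lemma even_card_if_even_fibres:
  assumes "finite N" "\<And>c. even (card {x \<in> N. f x = c})"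
  shows "even (card {x \<in> N. P (f x)})"
proof -
  have "{x \<in> N. P (f x)} = (\<Union>c\<in>{c \<in> f ` N. P c}. {x \<in> N. f x = c})" by auto
  moreover have "card (\<Union>c\<in>{c \<in> f ` N. P c}. {x \<in> N. f x = c})
      = (\<Sum>c\<in>{c \<in> f ` N. P c}. card {x \<in> N. f x = c})"
    using assms(1) by (intro card_UN_disjoint) auto
  ultimately show ?thesis using assms(2) by (simp add: dvd_sum)
qed

lemma xor_less_two_power:
  fixes x y :: nat
  assumes "x < 2 ^ n" "y < 2 ^ n"
  shows "xor x y < 2 ^ n"
proof -
  have "take_bit n x = x" "take_bit n y = y"
    using assms by (simp_all add: take_bit_nat_eq_self_iff)
  then have "xor x y = take_bit n (xor x y)" by (simp add: take_bit_xor)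
  also have "\<dots> < 2 ^ n" by (rule take_bit_nat_less_exp)
  finally show ?thesis .
qed

lemma exists_low_degree_vertex:
  assumes "finite W" "W \<noteq> {}"
    and "card {(x, y) \<in> W \<times> W. adj x y} \<le> d * card W"
  shows "\<exists>w\<in>W. card {y \<in> W. adj w y} \<le> d"
proof (rule ccontr)
  assume "\<not> ?thesis"
  then have "(\<Sum>w\<in>W. Suc d) \<le> (\<Sum>w\<in>W. card {y \<in> W. adj w y})"
    by (intro sum_mono) (simp add: not_le Suc_le_eq)
  also have "\<dots> = card (SIGMA w:W. {y \<in> W. adj w y})"
    using assms(1) by (simp add: card_SigmaI)
  also have "(SIGMA w:W. {y \<in> W. adj w y}) = {(x, y) \<in> W \<times> W. adj x y}" by auto
  finally have "Suc d * card W \<le> card {(x, y) \<in> W \<times> W. adj x y}" by (simp add: mult.commute)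
  then have "Suc d * card W \<le> d * card W" using assms(3) by linarith
  then have "card W = 0" by simp
  then show False using assms(1,2) by simp
qed

lemma exists_unused_colour:
  assumes "finite N" "card N \<le> d"
  obtains c :: nat where "c \<le> d" "c \<notin> f ` N"
proof -
  have "card (f ` N) < card {0..d}"
    using assms card_image_le[of N f] by simp
  then have "\<not> {0..d} \<subseteq> f ` N"
    using card_mono[of "f ` N" "{0..d}"] assms(1) by auto
  then obtain c where "c \<in> {0..d}" "c \<notin> f ` N" by blast
  then show ?thesis using that by simp
qed

lemma greedy_colouring:
  fixes adj :: "'a \<Rightarrow> 'a \<Rightarrow> bool"
  assumes "finite W" and sym: "\<And>x y. adj x y \<Longrightarrow> adj y x"
    and low: "\<And>U. U \<subseteq> W \<Longrightarrow> U \<noteq> {} \<Longrightarrow> \<exists>u\<in>U. card {y \<in> U. adj u y} \<le> d"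
  shows "\<exists>\<tau>. (\<forall>x\<in>W. \<tau> x \<le> d) \<and> (\<forall>x\<in>W. \<forall>y\<in>W. adj x y \<and> x \<noteq> y \<longrightarrow> \<tau> x \<noteq> \<tau> y)"
  using assms(1) low
proof (induction "card W" arbitrary: W rule: less_induct)
  case less
  show ?case
  proof (cases "W = {}")
    case True
    then show ?thesis by simp
  next
    case False
    then obtain w where w: "w \<in> W" "card {y \<in> W. adj w y} \<le> d"
      using less.prems(2)[of W] by blast
    have smaller: "card (W - {w}) < card W"
      using w(1) less.prems(1) by (rule card_Diff1_less[rotated])
    have finite: "finite (W - {w})" using less.prems(1) by simp
    have low: "\<exists>u\<in>U. card {y \<in> U. adj u y} \<le> d" if "U \<subseteq> W - {w}" "U \<noteq> {}" for U
      using less.prems(2) that by blast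
    have "\<exists>\<tau>. (\<forall>x\<in>W - {w}. \<tau> x \<le> d) \<and>
        (\<forall>x\<in>W - {w}. \<forall>y\<in>W - {w}. adj x y \<and> x \<noteq> y \<longrightarrow> \<tau> x \<noteq> \<tau> y)"
      using less.hyps[OF smaller finite low] by blast
    then obtain \<tau> where \<tau>: "\<forall>x\<in>W - {w}. \<tau> x \<le> d"
      "\<forall>x\<in>W - {w}. \<forall>y\<in>W - {w}. adj x y \<and> x \<noteq> y \<longrightarrow> \<tau> x \<noteq> \<tau> y"
      by metis
    obtain c where c: "c \<le> d" "c \<notin> \<tau> ` {y \<in> W. adj w y}"
      using exists_unused_colour[of "{y \<in> W. adj w y}" d \<tau>] w(2) less.prems(1) by auto
    have "(\<tau>(w := c)) x \<noteq> (\<tau>(w := c)) y"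
      if "x \<in> W" "y \<in> W" "adj x y" "x \<noteq> y" for x y
      using \<tau>(2) c(2) sym[OF that(3)] that by (cases "x = w"; cases "y = w") (auto simp: image_iff)
    moreover have "(\<tau>(w := c)) x \<le> d" if "x \<in> W" for x
      using \<tau>(1) c(1) that by auto
    ultimately show ?thesis by blast
  qed
qed

section \<open>Two laminar families of intervals\<close>

locale laminar_pair =
  fixes A B :: "'v set" and L R :: "'v \<Rightarrow> 'p::linorder"
  assumes finite_A: "finite A" and finite_B: "finite B" and disjoint: "A \<inter> B = {}"
    and L_less_R: "\<And>v. v \<in> A \<union> B \<Longrightarrow> L v < R v"
    and endpoints_distinct: "\<And>u v. u \<in> A \<union> B \<Longrightarrow> v \<in> A \<union> B \<Longrightarrow> u \<noteq> v \<Longrightarrow>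
      L u \<noteq> L v \<and> L u \<noteq> R v \<and> R u \<noteq> R v"
    and laminar_A: "\<And>u v. u \<in> A \<Longrightarrow> v \<in> A \<Longrightarrow> \<not> crosses (L u, R u) (L v, R v)"
    and laminar_B: "\<And>u v. u \<in> B \<Longrightarrow> v \<in> B \<Longrightarrow> \<not> crosses (L u, R u) (L v, R v)"
begin

abbreviation ivl :: "'v \<Rightarrow> 'p \<times> 'p" where
  "ivl v \<equiv> (L v, R v)"

definition covering :: "'p \<Rightarrow> 'v set" where
  "covering x = {b \<in> B. L b < x \<and> x < R b}"

definition innermost :: "'p \<Rightarrow> 'v option" where
  "innermost x = (if covering x = {} then None
     else Some (the_inv_into (covering x) L (Max (L ` covering x))))"

definition nest_vertices :: "'v option set" where
  "nest_vertices = insert None (Some ` B)"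

lemma finite_covering: "finite (covering x)"
  unfolding covering_def using finite_B by simp

lemma inj_on_L_B: "inj_on L B"
  using endpoints_distinct by (auto intro: inj_onI)

lemma innermost_None_iff: "innermost x = None \<longleftrightarrow> covering x = {}"
  unfolding innermost_def by simp

lemma innermost_SomeD:
  assumes "innermost x = Some b"
  shows "b \<in> covering x" "\<And>b'. b' \<in> covering x \<Longrightarrow> L b' \<le> L b"
proof -
  have ne: "covering x \<noteq> {}" and b: "b = the_inv_into (covering x) L (Max (L ` covering x))"
    using assms unfolding innermost_def by (auto split: if_splits)
  have inj: "inj_on L (covering x)"
    using inj_on_L_B by (rule inj_on_subset) (auto simp: covering_def)
  have max_in: "Max (L ` covering x) \<in> L ` covering x"
    using ne finite_covering by simp
  show "b \<in> covering x"
    unfolding b using inj max_in by (rule the_inv_into_into) simp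
  then show "L b' \<le> L b" if "b' \<in> covering x" for b'
    unfolding b using that f_the_inv_into_f[OF inj max_in] finite_covering by simp
qed

lemma innermost_in_nest_vertices: "innermost x \<in> nest_vertices"
  using innermost_SomeD(1)[of x] by (cases "innermost x") (auto simp: covering_def nest_vertices_def)

lemma covering_innermost:
  assumes "innermost x = Some b"
  shows "covering x = insert b (covering (L b))"
proof -
  have b: "b \<in> covering x" and max: "\<And>b'. b' \<in> covering x \<Longrightarrow> L b' \<le> L b"
    using innermost_SomeD[OF assms] by auto
  have "b' \<in> insert b (covering (L b))" if b': "b' \<in> covering x" for b'
  proof (cases "b' = b")
    case False
    then have "L b' \<noteq> L b"
      using inj_on_L_B b b' by (auto simp: covering_def inj_on_def)
    then show ?thesis using max[OF b'] b b' by (auto simp: covering_def)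
  qed simp
  moreover have "b' \<in> covering x" if b': "b' \<in> insert b (covering (L b))" for b'
  proof (cases "b' = b")
    case False
    then have "L b' < L b" "L b < R b'" "b' \<in> B" using b' by (auto simp: covering_def)
    moreover have "R b \<noteq> R b'"
      using endpoints_distinct[of b' b] False b \<open>b' \<in> B\<close> by (auto simp: covering_def)
    ultimately have "R b < R b'"
      using laminar_B[of b' b] b by (auto simp: covering_def crosses_def)
    then show ?thesis using b \<open>L b' < L b\<close> \<open>b' \<in> B\<close> by (auto simp: covering_def)
  qed (use b in simp)
  ultimately show ?thesis by blast
qed

lemma covering_eq_if_innermost_eq:
  assumes "innermost x = innermost y"
  shows "covering x = covering y"
  using assms covering_innermost innermost_None_iff by (cases "innermost x") metis+

definition xor_colour :: "('v option \<Rightarrow> nat) \<Rightarrow> 'v \<Rightarrow> nat" where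
  "xor_colour \<tau> b = xor (\<tau> (Some b)) (\<tau> (innermost (L b)))"

lemma odd_card_covering_bit:
  "odd (card {b \<in> covering x. bit (xor_colour \<tau> b) j}) \<longleftrightarrow>
     bit (\<tau> (innermost x)) j \<noteq> bit (\<tau> None) j"
proof (induction "card (covering x)" arbitrary: x rule: less_induct)
  case less
  show ?case
  proof (cases "innermost x")
    case None
    then have "covering x = {}" using innermost_None_iff by blast
    then show ?thesis using None by simp
  next
    case (Some b)
    let ?P = "\<lambda>b. bit (xor_colour \<tau> b) j"
    have b_notin: "b \<notin> covering (L b)" by (simp add: covering_def)
    have cov: "covering x = insert b (covering (L b))" by (rule covering_innermost[OF Some])
    then have "card (covering (L b)) < card (covering x)"
      using b_notin finite_covering by simp
    note IH = less.hyps[OF this]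
    have "{b' \<in> covering x. ?P b'} = (if ?P b then insert b {b' \<in> covering (L b). ?P b'}
        else {b' \<in> covering (L b). ?P b'})"
      unfolding cov by auto
    then have "odd (card {b' \<in> covering x. ?P b'}) \<longleftrightarrow>
        ?P b \<noteq> odd (card {b' \<in> covering (L b). ?P b'})"
      using b_notin finite_covering by simp
    moreover have "?P b \<longleftrightarrow> bit (\<tau> (Some b)) j \<noteq> bit (\<tau> (innermost (L b))) j"
      by (simp add: xor_colour_def bit_xor_iff)
    ultimately show ?thesis using IH Some by simp argo
  qed
qed

lemma interleaving_eq_sym_diff:
  assumes "a \<in> A"
  shows "{b \<in> B. interleave (ivl a) (ivl b)} = sym_diff (covering (L a)) (covering (R a))"
proof -
  have "interleave (ivl a) (ivl b) \<longleftrightarrow> (L b < L a \<and> L a < R b) \<noteq> (L b < R a \<and> R a < R b)"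
    if "b \<in> B" for b
  proof -
    have "a \<noteq> b" using assms that disjoint by auto
    then have "L a \<noteq> L b" "L a \<noteq> R b" "R a \<noteq> R b" "R a \<noteq> L b"
      using endpoints_distinct[of a b] endpoints_distinct[of b a] assms that by auto
    moreover have "L a < R a" "L b < R b" using L_less_R assms that by auto
    ultimately show ?thesis unfolding interleave_def crosses_def by auto
  qed
  then show ?thesis by (auto simp: covering_def)
qed

definition endpoints :: "'v set \<Rightarrow> 'p set" where
  "endpoints S = L ` S \<union> R ` S"

lemma finite_endpoints: "finite S \<Longrightarrow> finite (endpoints S)"
  unfolding endpoints_def by simp

lemma card_endpoints_le: "finite S \<Longrightarrow> card (endpoints S) \<le> 2 * card S"
  unfolding endpoints_def using card_Un_le[of "L ` S" "R ` S"] card_image_le[of S L] card_image_le[of S R]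
  by linarith

lemma A_endpoint_notin_endpoints_B:
  assumes "a \<in> A" "x \<in> {L a, R a}"
  shows "x \<notin> endpoints B"
proof -
  have "a \<noteq> b" if "b \<in> B" for b using assms(1) that disjoint by auto
  then show ?thesis
    using assms endpoints_distinct[of a] endpoints_distinct[of _ a] by (fastforce simp: endpoints_def)
qed

lemma covering_agree_if_rank_eq:
  assumes "B' \<subseteq> B" "b \<in> B'" "rank (endpoints B') x = rank (endpoints B') y"
    and "x \<notin> endpoints B'" "y \<notin> endpoints B'"
  shows "b \<in> covering x \<longleftrightarrow> b \<in> covering y"
proof -
  have fin: "finite (endpoints B')"
    using assms(1) finite_B finite_endpoints finite_subset by blast
  have "L b \<in> endpoints B'" "R b \<in> endpoints B'" using assms(2) by (auto simp: endpoints_def)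
  then have "L b < x \<longleftrightarrow> L b < y" "R b < x \<longleftrightarrow> R b < y"
    using less_iff_less_if_rank_eq[OF fin assms(3)] by auto
  moreover have "R b \<noteq> x" "R b \<noteq> y" using assms(4,5) \<open>R b \<in> endpoints B'\<close> by auto
  ultimately show ?thesis using assms(1,2) unfolding covering_def by auto
qed

lemma innermost_eq_if_covering_agree:
  assumes "B' \<subseteq> B" "innermost x \<in> insert None (Some ` B')" "innermost y \<in> insert None (Some ` B')"
    and agree: "\<And>b. b \<in> B' \<Longrightarrow> b \<in> covering x \<longleftrightarrow> b \<in> covering y"
  shows "innermost x = innermost y"
proof (cases "innermost x = None \<or> innermost y = None")
  case True
  have "innermost z = None \<longleftrightarrow> covering z \<inter> B' = {}"
    if "innermost z \<in> insert None (Some ` B')" for z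
    using that innermost_SomeD(1)[of z] innermost_None_iff[of z] by auto
  moreover have "covering x \<inter> B' = covering y \<inter> B'" using agree by auto
  ultimately show ?thesis using True assms(2,3) by metis
next
  case False
  then obtain b c where x: "innermost x = Some b" and y: "innermost y = Some c" by auto
  have "b \<in> covering y" "c \<in> covering x"
    using assms x y agree innermost_SomeD(1) by auto
  then have "L b = L c"
    using innermost_SomeD(2)[OF x] innermost_SomeD(2)[OF y] by (meson order_antisym)
  moreover have "b \<in> B" "c \<in> B" using innermost_SomeD(1)[OF x] innermost_SomeD(1)[OF y] by (auto simp: covering_def)
  ultimately show ?thesis using x y inj_on_L_B by (simp add: inj_on_def)
qed

definition nest_adj :: "'v option \<Rightarrow> 'v option \<Rightarrow> bool" where
  "nest_adj x y \<longleftrightarrow> x \<noteq> y \<and> (\<exists>a\<in>A. {x, y} = {innermost (L a), innermost (R a)})"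

definition nest_edge :: "'v \<Rightarrow> 'v option \<times> 'v option" where
  "nest_edge a = (innermost (L a), innermost (R a))"

definition chords_within :: "'v option set \<Rightarrow> 'v set" where
  "chords_within W = {a \<in> A. innermost (L a) \<in> W \<and> innermost (R a) \<in> W \<and>
     innermost (L a) \<noteq> innermost (R a)}"

lemma innermost_eq_if_rank_eq:
  assumes B': "B' \<subseteq> B" and W: "W \<subseteq> insert None (Some ` B')"
    and a: "a \<in> chords_within W" "a' \<in> chords_within W" and xy: "x \<in> {L a, R a}" "y \<in> {L a', R a'}"
    and rank: "rank (endpoints B') x = rank (endpoints B') y"
  shows "innermost x = innermost y"
proof -
  have "endpoints B' \<subseteq> endpoints B" using B' by (auto simp: endpoints_def)
  then have "x \<notin> endpoints B'" "y \<notin> endpoints B'"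
    using A_endpoint_notin_endpoints_B a xy by (auto simp: chords_within_def)
  moreover have "innermost x \<in> insert None (Some ` B')" "innermost y \<in> insert None (Some ` B')"
    using a xy W by (auto simp: chords_within_def)
  ultimately show ?thesis
    using covering_agree_if_rank_eq[OF B' _ rank] by (intro innermost_eq_if_covering_agree[OF B']) auto
qed

lemma nest_adj_sym: "nest_adj x y \<Longrightarrow> nest_adj y x"
  unfolding nest_adj_def by (auto simp: insert_commute)

lemma card_nest_adj_le_nest_edges:
  "card {(x, y) \<in> W \<times> W. nest_adj x y} \<le> 2 * card (nest_edge ` chords_within W)"
proof -
  have fin: "finite (chords_within W)" using finite_A by (simp add: chords_within_def)
  have "{(x, y) \<in> W \<times> W. nest_adj x y} \<subseteq>
      nest_edge ` chords_within W \<union> prod.swap ` nest_edge ` chords_within W"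
  proof clarify
    fix x y assume xy: "x \<in> W" "y \<in> W" "nest_adj x y" "(x, y) \<notin> prod.swap ` nest_edge ` chords_within W"
    then obtain a where a: "a \<in> A" "x \<noteq> y" "{x, y} = {innermost (L a), innermost (R a)}"
      by (auto simp: nest_adj_def)
    then have "a \<in> chords_within W" using xy(1,2) by (auto simp: chords_within_def doubleton_eq_iff)
    moreover have "(x, y) = nest_edge a \<or> (x, y) = prod.swap (nest_edge a)"
      using a(3) by (auto simp: nest_edge_def doubleton_eq_iff)
    ultimately show "(x, y) \<in> nest_edge ` chords_within W" using xy(4) by blast
  qed
  then have "card {(x, y) \<in> W \<times> W. nest_adj x y} \<le>
      card (nest_edge ` chords_within W) + card (prod.swap ` nest_edge ` chords_within W)"
    using fin by (meson card_Un_le card_mono finite_Un finite_imageI order_trans)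
  also have "\<dots> \<le> 2 * card (nest_edge ` chords_within W)"
    using card_image_le[of "nest_edge ` chords_within W" prod.swap] fin by simp
  finally show ?thesis .
qed

text \<open>Ranked among the endpoints of the intervals in \<open>B'\<close>, the chords of \<open>A\<close> still determine their
  nest edges and still form a non-crossing family, now on \<open>2 |B'|\<close> points.\<close>
lemma card_nest_edges_le:
  assumes B': "B' \<subseteq> B" and W: "W \<subseteq> insert None (Some ` B')"
  shows "card (nest_edge ` chords_within W) \<le> 4 * card B'"
proof -
  define P where "P = endpoints B'"
  define ranks where "ranks a = (rank P (L a), rank P (R a))" for a
  have finB': "finite B'" using B' finite_B by (rule finite_subset)
  have finP: "finite P" using finB' by (simp add: P_def finite_endpoints)
  note same_innermost = innermost_eq_if_rank_eq[OF B' W, folded P_def]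
  have "card (nest_edge ` chords_within W) \<le> card (ranks ` chords_within W)"
  proof (rule card_image_le_if_factors)
    show "finite (chords_within W)" using finite_A by (simp add: chords_within_def)
    fix a a' assume "a \<in> chords_within W" "a' \<in> chords_within W" "ranks a = ranks a'"
    then show "nest_edge a = nest_edge a'"
      using same_innermost[of a a' "L a" "L a'"] same_innermost[of a a' "R a" "R a'"]
      by (simp add: nest_edge_def ranks_def)
  qed
  also have "\<dots> \<le> 2 * card P"
  proof (rule card_noncrossing_le)
    fix i j assume "(i, j) \<in> ranks ` chords_within W"
    then obtain a where a: "a \<in> chords_within W" "i = rank P (L a)" "j = rank P (R a)"
      by (auto simp: ranks_def)
    have "i \<le> j" using a L_less_R rank_mono[OF finP] by (auto simp: chords_within_def less_imp_le)
    moreover have "i \<noteq> j"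
    proof
      assume "i = j"
      then have "innermost (L a) = innermost (R a)"
        using same_innermost[OF a(1) a(1)] a(2,3) by simp
      then show False using a(1) by (simp add: chords_within_def)
    qed
    ultimately show "i < j \<and> j \<le> card P" using a rank_le_card[OF finP] by simp
  next
    fix I J assume "I \<in> ranks ` chords_within W" "J \<in> ranks ` chords_within W"
    then obtain a a' where "a \<in> A" "a' \<in> A" "I = ranks a" "J = ranks a'"
      by (auto simp: chords_within_def)
    then show "\<not> crosses I J"
      using laminar_A[of a a'] less_if_rank_less[OF finP] by (auto simp: crosses_def ranks_def)
  qed
  also have "card P \<le> 2 * card B'" unfolding P_def using finB' by (rule card_endpoints_le)
  finally show ?thesis by simp
qed

lemma card_nest_adj_le:
  assumes W: "W \<subseteq> nest_vertices"
  shows "card {(x, y) \<in> W \<times> W. nest_adj x y} \<le> 8 * card W"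
proof -
  define B' where "B' = {b \<in> B. Some b \<in> W}"
  have W_B': "W \<subseteq> insert None (Some ` B')" using W by (auto simp: nest_vertices_def B'_def)
  have "card B' = card (Some ` B')" by (simp add: card_image)
  also have "\<dots> \<le> card W"
    using finite_subset[OF W] finite_B by (intro card_mono) (auto simp: nest_vertices_def B'_def)
  finally have "card B' \<le> card W" .
  moreover have "card (nest_edge ` chords_within W) \<le> 4 * card B'"
    using W_B' by (intro card_nest_edges_le) (auto simp: B'_def)
  ultimately show ?thesis using card_nest_adj_le_nest_edges[of W] by linarith
qed

lemma exists_nest_colouring:
  "\<exists>\<tau> :: 'v option \<Rightarrow> nat. (\<forall>x\<in>nest_vertices. \<tau> x \<le> 8) \<and>
     (\<forall>x\<in>nest_vertices. \<forall>y\<in>nest_vertices. nest_adj x y \<and> x \<noteq> y \<longrightarrow> \<tau> x \<noteq> \<tau> y)"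
proof (rule greedy_colouring[where adj = nest_adj])
  show fin: "finite nest_vertices" using finite_B by (simp add: nest_vertices_def)
  show "nest_adj y x" if "nest_adj x y" for x y using that by (rule nest_adj_sym)
  show "\<exists>u\<in>U. card {y \<in> U. nest_adj u y} \<le> 8" if "U \<subseteq> nest_vertices" "U \<noteq> {}" for U
    using exists_low_degree_vertex[OF finite_subset[OF that(1) fin] that(2) card_nest_adj_le[OF that(1)]] .
qed

definition odd_on_neighbourhoods :: "('v \<Rightarrow> nat) \<Rightarrow> bool" where
  "odd_on_neighbourhoods col \<longleftrightarrow> (\<forall>a\<in>A. (\<exists>b\<in>B. interleave (ivl a) (ivl b)) \<longrightarrow>
     (\<exists>c. odd (card {b \<in> B. interleave (ivl a) (ivl b) \<and> col b = c})))"

lemma odd_on_neighbourhoods_xor_colour: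
  assumes proper: "\<forall>x\<in>nest_vertices. \<forall>y\<in>nest_vertices. nest_adj x y \<and> x \<noteq> y \<longrightarrow> \<tau> x \<noteq> \<tau> y"
  shows "odd_on_neighbourhoods (xor_colour \<tau>)"
  unfolding odd_on_neighbourhoods_def
proof (intro ballI impI)
  fix a assume a: "a \<in> A" and ne: "\<exists>b\<in>B. interleave (ivl a) (ivl b)"
  let ?N = "{b \<in> B. interleave (ivl a) (ivl b)}"
  have N: "?N = sym_diff (covering (L a)) (covering (R a))"
    by (rule interleaving_eq_sym_diff[OF a])
  then have "covering (L a) \<noteq> covering (R a)" using ne by auto
  then have "innermost (L a) \<noteq> innermost (R a)" using covering_eq_if_innermost_eq by blast
  then have "\<tau> (innermost (L a)) \<noteq> \<tau> (innermost (R a))"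
    using a proper innermost_in_nest_vertices unfolding nest_adj_def by blast
  then obtain j where j: "bit (\<tau> (innermost (L a))) j \<noteq> bit (\<tau> (innermost (R a))) j"
    using bit_eq_iff by blast
  have "{b \<in> ?N. bit (xor_colour \<tau> b) j} = sym_diff {b \<in> covering (L a). bit (xor_colour \<tau> b) j}
      {b \<in> covering (R a). bit (xor_colour \<tau> b) j}"
    unfolding N by auto
  then have "odd (card {b \<in> ?N. bit (xor_colour \<tau> b) j})"
    using odd_card_sym_diff[of "{b \<in> covering (L a). bit (xor_colour \<tau> b) j}"
        "{b \<in> covering (R a). bit (xor_colour \<tau> b) j}"]
      odd_card_covering_bit[of "L a"] odd_card_covering_bit[of "R a"] j finite_covering
    by simp
  then obtain c where "odd (card {b \<in> ?N. xor_colour \<tau> b = c})"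
    using even_card_if_even_fibres[of ?N "xor_colour \<tau>" "\<lambda>c. bit c j"] finite_B by auto
  moreover have "{b \<in> ?N. xor_colour \<tau> b = c} =
      {b \<in> B. interleave (ivl a) (ivl b) \<and> xor_colour \<tau> b = c}"
    by auto
  ultimately show "\<exists>c. odd (card {b \<in> B. interleave (ivl a) (ivl b) \<and> xor_colour \<tau> b = c})"
    by auto
qed

theorem exists_odd_on_neighbourhoods:
  "\<exists>col. (\<forall>b\<in>B. col b < 16) \<and> odd_on_neighbourhoods col"
proof -
  obtain \<tau> :: "'v option \<Rightarrow> nat" where \<tau>: "\<forall>x\<in>nest_vertices. \<tau> x \<le> 8"
    "\<forall>x\<in>nest_vertices. \<forall>y\<in>nest_vertices. nest_adj x y \<and> x \<noteq> y \<longrightarrow> \<tau> x \<noteq> \<tau> y"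
    using exists_nest_colouring by blast
  have "xor_colour \<tau> b < 2 ^ 4" if "b \<in> B" for b
    unfolding xor_colour_def using \<tau>(1) that innermost_in_nest_vertices[of "L b"]
    by (intro xor_less_two_power) (auto simp: nest_vertices_def)
  then show ?thesis using odd_on_neighbourhoods_xor_colour[OF \<tau>(2)] by auto
qed

lemma laminar_pair_swap: "laminar_pair B A L R"
  using finite_A finite_B disjoint L_less_R endpoints_distinct laminar_A laminar_B
  by unfold_locales (auto simp: Un_commute)

lemma odd_coloring_interleaving_graph:
  assumes E: "\<And>u v. E u v \<longleftrightarrow> (u \<in> A \<and> v \<in> B \<or> u \<in> B \<and> v \<in> A) \<and> interleave (ivl u) (ivl v)"
  shows "\<exists>col. odd_coloring (A \<union> B) E 32 col"
proof -
  obtain colB where colB: "\<forall>b\<in>B. colB b < 16" "odd_on_neighbourhoods colB"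
    using exists_odd_on_neighbourhoods by blast
  obtain colA where colA: "\<forall>a\<in>A. colA a < 16" "laminar_pair.odd_on_neighbourhoods B A L R colA"
    using laminar_pair.exists_odd_on_neighbourhoods[OF laminar_pair_swap] by blast
  define col where "col v = (if v \<in> A then colA v else 16 + colB v)" for v
  have "\<exists>c. odd (card {u \<in> A \<union> B. E v u \<and> col u = c})" if v: "v \<in> A \<union> B" "E v w" for v w
  proof (cases "v \<in> A")
    case True
    then have "\<exists>b\<in>B. interleave (ivl v) (ivl b)" using v(2) E disjoint by auto
    then obtain c where "odd (card {b \<in> B. interleave (ivl v) (ivl b) \<and> colB b = c})"
      using colB(2) True unfolding odd_on_neighbourhoods_def by blast
    moreover have "{u \<in> A \<union> B. E v u \<and> col u = 16 + c} =
        {b \<in> B. interleave (ivl v) (ivl b) \<and> colB b = c}"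
      using True E disjoint colA(1) by (auto simp: col_def)
    ultimately show ?thesis by metis
  next
    case False
    then have vB: "v \<in> B" using v(1) by simp
    then have "\<exists>a\<in>A. interleave (ivl v) (ivl a)" using v(2) E disjoint by auto
    then obtain c where odd: "odd (card {a \<in> A. interleave (ivl v) (ivl a) \<and> colA a = c})"
      using colA(2) vB unfolding laminar_pair.odd_on_neighbourhoods_def[OF laminar_pair_swap] by blast
    then have "c < 16" using colA(1) by (metis (mono_tags, lifting) card.empty empty_Collect_eq odd_pos
        less_not_refl)
    then have "{u \<in> A \<union> B. E v u \<and> col u = c} =
        {a \<in> A. interleave (ivl v) (ivl a) \<and> colA a = c}"
      using vB E disjoint by (auto simp: col_def)
    then show ?thesis using odd by metis
  qed
  moreover have "col u \<noteq> col v" if "u \<in> A \<union> B" "v \<in> A \<union> B" "E u v" for u v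
    using that E colA(1) disjoint by (auto simp: col_def)
  moreover have "col v < 32" if "v \<in> A \<union> B" for v
    using that colA(1) colB(1) by (auto simp: col_def)
  ultimately show ?thesis unfolding odd_coloring_def by blast
qed
end

section \<open>Chords of the unit circle\<close>

lemma convex_combination_root:
  fixes s t :: real
  assumes "s * t \<le> 0"
  obtains u where "0 \<le> u" "u \<le> 1" "(1 - u) * s + u * t = 0"
proof (cases "s = t")
  case True
  then have "s = 0" using assms by (auto simp: mult_le_0_iff)
  then show ?thesis using that[of 0] True by simp
next
  case False
  show ?thesis
  proof (rule that[of "s / (s - t)"])
    show "(1 - s / (s - t)) * s + s / (s - t) * t = 0"
      using False by (simp add: field_simps)
    show "0 \<le> s / (s - t)" "s / (s - t) \<le> 1"
      using assms False by (auto simp: mult_le_0_iff divide_simps)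
  qed
qed

lemma parallel_vector_scale:
  fixes d1 d2 y1 y2 :: real
  assumes "d1 \<noteq> 0 \<or> d2 \<noteq> 0" "d1 * y2 = d2 * y1"
  shows "\<exists>t. y1 = t * d1 \<and> y2 = t * d2"
proof -
  define n where "n = d1\<^sup>2 + d2\<^sup>2"
  have "n > 0" using assms(1) unfolding n_def by (auto simp: add_pos_nonneg add_nonneg_pos)
  moreover have "y1 * n = (d1 * y1 + d2 * y2) * d1" "y2 * n = (d1 * y1 + d2 * y2) * d2"
    using assms(2) unfolding n_def by (simp_all add: power2_eq_square algebra_simps)
  ultimately show ?thesis
    by (intro exI[of _ "(d1 * y1 + d2 * y2) / n"]) (simp add: field_simps)
qed

lemma chord_parameter_bounds:
  fixes p1 p2 d1 d2 t :: real
  assumes "p1\<^sup>2 + p2\<^sup>2 = 1" "(p1 + d1)\<^sup>2 + (p2 + d2)\<^sup>2 = 1"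
    and "(p1 + t * d1)\<^sup>2 + (p2 + t * d2)\<^sup>2 \<le> 1" and "d1 \<noteq> 0 \<or> d2 \<noteq> 0"
  shows "0 \<le> t \<and> t \<le> 1"
proof -
  define n where "n = d1\<^sup>2 + d2\<^sup>2"
  have n: "n > 0" using assms(4) unfolding n_def by (auto simp: add_pos_nonneg add_nonneg_pos)
  have h: "2 * (p1 * d1 + p2 * d2) = - n"
    using assms(1,2) unfolding n_def by (simp add: power2_eq_square algebra_simps)
  have "(p1 + t * d1)\<^sup>2 + (p2 + t * d2)\<^sup>2 = (p1\<^sup>2 + p2\<^sup>2) + t * (2 * (p1 * d1 + p2 * d2)) + t\<^sup>2 * n"
    unfolding n_def by (simp add: power2_eq_square algebra_simps)
  also have "\<dots> = 1 + (t\<^sup>2 - t) * n"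
    unfolding assms(1) h by (simp add: algebra_simps)
  finally have "(p1 + t * d1)\<^sup>2 + (p2 + t * d2)\<^sup>2 = 1 + (t\<^sup>2 - t) * n" .
  then have "(t\<^sup>2 - t) * n \<le> 0" using assms(3) by linarith
  then have "t * (t - 1) \<le> 0" using n by (simp add: mult_le_0_iff power2_eq_square algebra_simps)
  then show ?thesis by (simp add: mult_le_0_iff) linarith
qed

text \<open>\<open>Im (cnj (Q - P) * (X - P))\<close> is \<open>|Q - P|\<close> times the signed distance of \<open>X\<close> from the
  line \<open>PQ\<close>.\<close>
lemma side_product_nonpos_if_segments_meet:
  assumes "closed_segment P Q \<inter> closed_segment Z W \<noteq> {}"
  shows "Im (cnj (Q - P) * (Z - P)) * Im (cnj (Q - P) * (W - P)) \<le> 0"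
    (is "?f Z * ?f W \<le> 0")
proof -
  obtain t u where tu: "(1 - t) *\<^sub>R P + t *\<^sub>R Q = (1 - u) *\<^sub>R Z + u *\<^sub>R W" "0 \<le> u" "u \<le> 1"
    using assms unfolding closed_segment_def by auto
  have "(1 - t) *\<^sub>R P + t *\<^sub>R Q - P = of_real t * (Q - P)"
    by (simp add: scaleR_conv_of_real algebra_simps)
  then have "?f ((1 - t) *\<^sub>R P + t *\<^sub>R Q) = t * Im (cnj (Q - P) * (Q - P))"
    by (simp add: algebra_simps)
  also have "\<dots> = 0" by (simp add: algebra_simps)
  also have "?f ((1 - t) *\<^sub>R P + t *\<^sub>R Q) = (1 - u) * ?f Z + u * ?f W"
    unfolding tu(1) by (simp add: scaleR_conv_of_real algebra_simps)
  finally have e: "(1 - u) * ?f Z + u * ?f W = 0" .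
  show ?thesis
  proof (cases "u = 0")
    case True
    then show ?thesis using e by simp
  next
    case False
    have "u * (?f Z * ?f W) = - ((1 - u) * (?f Z)\<^sup>2)"
      using arg_cong[OF e, of "\<lambda>s. ?f Z * s"] by (simp add: algebra_simps power2_eq_square)
    also have "\<dots> \<le> 0" using tu(3) by simp
    finally show ?thesis using False tu(2) by (simp add: mult_le_0_iff)
  qed
qed

lemma line_in_disc_subset_chord:
  assumes P: "cmod P = 1" and Q: "cmod Q = 1" and "P \<noteq> Q" and X: "cmod X \<le> 1"
    and on_line: "Im (cnj (Q - P) * (X - P)) = 0"
  shows "X \<in> closed_segment P Q"
proof -
  define D where "D = Q - P"
  have D: "Re D \<noteq> 0 \<or> Im D \<noteq> 0" using \<open>P \<noteq> Q\<close> unfolding D_def by (auto simp: complex_eq_iff)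
  have "Re D * Im (X - P) = Im D * Re (X - P)" using on_line unfolding D_def by (simp add: algebra_simps)
  then obtain t where t: "Re (X - P) = t * Re D" "Im (X - P) = t * Im D"
    using parallel_vector_scale[OF D] by blast
  have X_eq: "X = P + of_real t * D" using t by (simp add: complex_eq_iff)
  have "0 \<le> t \<and> t \<le> 1"
  proof (rule chord_parameter_bounds[OF _ _ _ D])
    show "(Re P)\<^sup>2 + (Im P)\<^sup>2 = 1" using P by (simp add: cmod_power2[symmetric])
    show "(Re P + Re D)\<^sup>2 + (Im P + Im D)\<^sup>2 = 1"
      using Q unfolding D_def by (simp add: cmod_power2[symmetric])
    have "(cmod X)\<^sup>2 \<le> 1" using X by (simp add: power_le_one)
    then show "(Re P + t * Re D)\<^sup>2 + (Im P + t * Im D)\<^sup>2 \<le> 1"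
      unfolding X_eq by (simp add: cmod_power2)
  qed
  moreover have "X = (1 - t) *\<^sub>R P + t *\<^sub>R Q"
    unfolding X_eq D_def by (simp add: scaleR_conv_of_real algebra_simps)
  ultimately show ?thesis unfolding closed_segment_def by auto
qed

lemma chord_meets_segment_iff:
  assumes P: "cmod P = 1" and Q: "cmod Q = 1" and "P \<noteq> Q" and Z: "cmod Z \<le> 1" and W: "cmod W \<le> 1"
  shows "closed_segment P Q \<inter> closed_segment Z W \<noteq> {} \<longleftrightarrow>
     Im (cnj (Q - P) * (Z - P)) * Im (cnj (Q - P) * (W - P)) \<le> 0"
    (is "_ \<longleftrightarrow> ?f Z * ?f W \<le> 0")
proof
  assume "?f Z * ?f W \<le> 0"
  then obtain u where u: "0 \<le> u" "u \<le> 1" "(1 - u) * ?f Z + u * ?f W = 0"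
    by (rule convex_combination_root)
  define X where "X = (1 - u) *\<^sub>R Z + u *\<^sub>R W"
  have "X \<in> closed_segment Z W" unfolding X_def closed_segment_def using u by auto
  moreover have "closed_segment Z W \<subseteq> cball 0 1"
    using Z W by (intro closed_segment_subset) (auto simp: convex_cball)
  moreover have "?f X = 0" unfolding X_def using u by (simp add: scaleR_conv_of_real algebra_simps)
  ultimately show "closed_segment P Q \<inter> closed_segment Z W \<noteq> {}"
    using line_in_disc_subset_chord[OF P Q \<open>P \<noteq> Q\<close>] by fastforce
qed (rule side_product_nonpos_if_segments_meet)

lemma sin_double_identity:
  fixes s t :: real
  shows "sin (2 * s) + sin (2 * t) - sin (2 * s + 2 * t) = 4 * sin s * sin t * sin (s + t)"
proof -
  have 1: "2 * (sin s * sin t) = cos (s - t) - cos (s + t)"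
    using sin_times_sin[of s t] by simp
  have "(s + t) + (s - t) = 2 * s" "(s + t) - (s - t) = 2 * t" "(s + t) + (s + t) = 2 * s + 2 * t"
    by simp_all
  then have 2: "sin (s + t) * cos (s - t) = (sin (2 * s) + sin (2 * t)) / 2"
    and 3: "sin (s + t) * cos (s + t) = sin (2 * s + 2 * t) / 2"
    using sin_times_cos[of "s + t" "s - t"] sin_times_cos[of "s + t" "s + t"] by simp_all
  have "4 * sin s * sin t * sin (s + t) = 2 * (2 * (sin s * sin t)) * sin (s + t)" by simp
  also have "\<dots> = 2 * (sin (s + t) * cos (s - t)) - 2 * (sin (s + t) * cos (s + t))"
    unfolding 1 by (simp add: algebra_simps)
  finally show ?thesis unfolding 2 3 by simp
qed

lemma Im_cnj_cis_diff:
  fixes a b x :: real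
  shows "Im (cnj (cis b - cis a) * (cis x - cis a)) =
    4 * sin ((x - b) / 2) * sin ((b - a) / 2) * sin ((x - a) / 2)"
proof -
  have "cnj (cis b - cis a) * (cis x - cis a) =
      cis (-b) * cis x - cis (-b) * cis a - cis (-a) * cis x + cis (-a) * cis a"
    by (simp add: cis_cnj algebra_simps)
  also have "\<dots> = cis (x - b) - cis (a - b) - cis (x - a) + 1"
    by (simp add: cis_mult)
  finally have "Im (cnj (cis b - cis a) * (cis x - cis a)) = sin (x - b) - sin (a - b) - sin (x - a)"
    by simp
  also have "\<dots> = sin (2 * ((x - b) / 2)) + sin (2 * ((b - a) / 2))
      - sin (2 * ((x - b) / 2) + 2 * ((b - a) / 2))"
  proof -
    have "sin (a - b) = - sin (b - a)" by (metis minus_diff_eq sin_minus)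
    moreover have "2 * ((x - b) / 2) = x - b" "2 * ((b - a) / 2) = b - a" "x - b + (b - a) = x - a"
      by simp_all
    ultimately show ?thesis by (simp only:)
  qed
  also have "\<dots> = 4 * sin ((x - b) / 2) * sin ((b - a) / 2) * sin ((x - b) / 2 + (b - a) / 2)"
    by (rule sin_double_identity)
  also have "(x - b) / 2 + (b - a) / 2 = (x - a) / 2" by (simp add: field_simps)
  finally show ?thesis .
qed

lemma sgn_sin_half:
  fixes y :: real
  assumes "-2 * pi < y" "y < 2 * pi"
  shows "sgn (sin (y / 2)) = sgn y"
proof (cases y "0::real" rule: linorder_cases)
  case less
  then have "sin (- y / 2) > 0" using assms by (intro sin_gt_zero) auto
  then show ?thesis using less by simp
next
  case greater
  then have "sin (y / 2) > 0" using assms by (intro sin_gt_zero) auto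
  then show ?thesis using greater by simp
qed simp

lemma unit_eq_cis_Arg:
  assumes "cmod z = 1"
  shows "z = cis (Arg z)"
proof -
  have "z \<noteq> 0" using assms by auto
  then show ?thesis using Arg_eq[of z] assms by (simp add: cis_conv_exp)
qed

lemma chords_meet_iff_Arg:
  assumes P: "cmod P = 1" and Q: "cmod Q = 1" and Z: "cmod Z = 1" and W: "cmod W = 1"
    and "P \<noteq> Q"
  shows "closed_segment P Q \<inter> closed_segment Z W \<noteq> {} \<longleftrightarrow>
    ((Arg Z - Arg P) * (Arg Z - Arg Q)) * ((Arg W - Arg P) * (Arg W - Arg Q)) \<le> 0"
proof -
  define a b c d where "a = Arg P" "b = Arg Q" "c = Arg Z" "d = Arg W"
  have cis: "P = cis a" "Q = cis b" "Z = cis c" "W = cis d"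
    using unit_eq_cis_Arg P Q Z W unfolding a_b_c_d_def by auto
  have "a \<noteq> b" using \<open>P \<noteq> Q\<close> cis by auto
  have range: "-pi < t \<and> t \<le> pi" if "t \<in> {a, b, c, d}" for t
    using that mpi_less_Arg Arg_le_pi unfolding a_b_c_d_def by auto
  have sg: "sgn (sin ((y - z) / 2)) = sgn (y - z)" if "y \<in> {a, b, c, d}" "z \<in> {a, b, c, d}" for y z
    using range[OF that(1)] range[OF that(2)] by (intro sgn_sin_half) auto
  have sg_ab: "sgn (sin ((b - a) / 2)) * sgn (sin ((b - a) / 2)) = 1"
    using sg[of b a] \<open>a \<noteq> b\<close> by (cases "b > a") (auto simp: sgn_if)
  have "closed_segment P Q \<inter> closed_segment Z W \<noteq> {} \<longleftrightarrow>
     Im (cnj (Q - P) * (Z - P)) * Im (cnj (Q - P) * (W - P)) \<le> 0"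
    using P Q Z W \<open>P \<noteq> Q\<close> by (intro chord_meets_segment_iff) auto
  also have "\<dots> \<longleftrightarrow> (4 * sin ((c - b) / 2) * sin ((b - a) / 2) * sin ((c - a) / 2)) *
        (4 * sin ((d - b) / 2) * sin ((b - a) / 2) * sin ((d - a) / 2)) \<le> 0"
    unfolding cis Im_cnj_cis_diff ..
  also have "\<dots> \<longleftrightarrow> sgn ((4 * sin ((c - b) / 2) * sin ((b - a) / 2) * sin ((c - a) / 2)) *
        (4 * sin ((d - b) / 2) * sin ((b - a) / 2) * sin ((d - a) / 2))) \<le> 0"
    by simp
  also have "sgn ((4 * sin ((c - b) / 2) * sin ((b - a) / 2) * sin ((c - a) / 2)) *
        (4 * sin ((d - b) / 2) * sin ((b - a) / 2) * sin ((d - a) / 2))) =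
      sgn (c - b) * sgn (c - a) * sgn (d - b) * sgn (d - a) *
        (sgn (sin ((b - a) / 2)) * sgn (sin ((b - a) / 2)))"
    using sg by (simp add: sgn_mult)
  also have "\<dots> = sgn (((c - a) * (c - b)) * ((d - a) * (d - b)))"
    using sg_ab by (simp add: sgn_mult)
  finally show ?thesis unfolding a_b_c_d_def by simp
qed

section \<open>Bipartite circle graphs as interleaving interval families\<close>

text \<open>\<open>Shifted x d\<close> stands for \<open>x + d \<epsilon>\<close> with an infinitesimal \<open>\<epsilon> > 0\<close>.\<close>
datatype shifted = Shifted real int

instantiation shifted :: linorder
begin

fun less_eq_shifted :: "shifted \<Rightarrow> shifted \<Rightarrow> bool" where
  "less_eq_shifted (Shifted x d) (Shifted y e) \<longleftrightarrow> x < y \<or> (x = y \<and> d \<le> e)"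

fun less_shifted :: "shifted \<Rightarrow> shifted \<Rightarrow> bool" where
  "less_shifted (Shifted x d) (Shifted y e) \<longleftrightarrow> x < y \<or> (x = y \<and> d < e)"

instance
proof
  fix a b c :: shifted
  show "a < b \<longleftrightarrow> a \<le> b \<and> \<not> b \<le> a" by (cases a; cases b) auto
  show "a \<le> a" by (cases a) auto
  show "a \<le> b \<Longrightarrow> b \<le> c \<Longrightarrow> a \<le> c" by (cases a; cases b; cases c) auto
  show "a \<le> b \<Longrightarrow> b \<le> a \<Longrightarrow> a = b" by (cases a; cases b) auto
  show "a \<le> b \<or> b \<le> a" by (cases a; cases b) auto
qed

end

lemma Shifted_less_Shifted_iff: "x \<noteq> y \<Longrightarrow> Shifted x d < Shifted y e \<longleftrightarrow> x < y"
  by auto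

locale bipartite_chord_diagram =
  fixes V :: "'a set" and E :: "'a \<Rightarrow> 'a \<Rightarrow> bool" and p q :: "'a \<Rightarrow> complex"
    and side :: "'a \<Rightarrow> bool"
  assumes finite_V: "finite V"
    and E_in_V: "\<And>u v. E u v \<Longrightarrow> u \<in> V \<and> v \<in> V"
    and on_circle: "\<And>v. v \<in> V \<Longrightarrow> cmod (p v) = 1 \<and> cmod (q v) = 1 \<and> p v \<noteq> q v"
    and E_iff_chords_meet: "\<And>u v. u \<in> V \<Longrightarrow> v \<in> V \<Longrightarrow> u \<noteq> v \<Longrightarrow>
      E u v \<longleftrightarrow> closed_segment (p u) (q u) \<inter> closed_segment (p v) (q v) \<noteq> {}"
    and side_differs: "\<And>u v. u \<in> V \<Longrightarrow> v \<in> V \<Longrightarrow> E u v \<Longrightarrow> side u \<noteq> side v"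
begin

definition lo :: "'a \<Rightarrow> real" where
  "lo v = min (Arg (p v)) (Arg (q v))"

definition hi :: "'a \<Rightarrow> real" where
  "hi v = max (Arg (p v)) (Arg (q v))"

definition arc_poly :: "'a \<Rightarrow> real \<Rightarrow> real" where
  "arc_poly u x = (x - lo u) * (x - hi u)"

lemma lo_less_hi:
  assumes "v \<in> V"
  shows "lo v < hi v"
proof -
  have "Arg (p v) \<noteq> Arg (q v)"
    using on_circle[OF assms] unit_eq_cis_Arg[of "p v"] unit_eq_cis_Arg[of "q v"] by metis
  then show ?thesis unfolding lo_def hi_def by auto
qed

lemma arc_poly_neg_iff: "v \<in> V \<Longrightarrow> arc_poly v x < 0 \<longleftrightarrow> lo v < x \<and> x < hi v"
  using lo_less_hi[of v] by (auto simp: arc_poly_def mult_less_0_iff)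

lemma E_iff_arc_poly:
  assumes "u \<in> V" "v \<in> V" "u \<noteq> v"
  shows "E u v \<longleftrightarrow> arc_poly u (lo v) * arc_poly u (hi v) \<le> 0"
proof -
  have "arc_poly u x = (x - Arg (p u)) * (x - Arg (q u))" for x
    unfolding arc_poly_def lo_def hi_def by (auto simp: min_def max_def algebra_simps)
  moreover have "arc_poly u (lo v) * arc_poly u (hi v) = arc_poly u (Arg (p v)) * arc_poly u (Arg (q v))"
    unfolding lo_def hi_def by (auto simp: min_def max_def)
  ultimately show ?thesis
    using E_iff_chords_meet[OF assms] chords_meet_iff_Arg[of "p u" "q u" "p v" "q v"]
      on_circle[OF assms(1)] on_circle[OF assms(2)] by simp
qed

lemma same_side_separated:
  assumes "u \<in> V" "v \<in> V" "u \<noteq> v" "side u = side v"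
  shows "lo v \<noteq> lo u" "lo v \<noteq> hi u" "hi v \<noteq> lo u" "hi v \<noteq> hi u"
    and "lo u < lo v \<and> lo v < hi u \<longleftrightarrow> lo u < hi v \<and> hi v < hi u"
proof -
  have "\<not> arc_poly u (lo v) * arc_poly u (hi v) \<le> 0"
    using E_iff_arc_poly[OF assms(1-3)] side_differs[OF assms(1,2)] assms(4) by auto
  then have "arc_poly u (lo v) \<noteq> 0" "arc_poly u (hi v) \<noteq> 0"
    and "arc_poly u (lo v) < 0 \<longleftrightarrow> arc_poly u (hi v) < 0"
    by (auto simp: mult_le_0_iff)
  then show "lo v \<noteq> lo u" "lo v \<noteq> hi u" "hi v \<noteq> lo u" "hi v \<noteq> hi u"
    and "lo u < lo v \<and> lo v < hi u \<longleftrightarrow> lo u < hi v \<and> hi v < hi u"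
    using arc_poly_neg_iff[OF assms(1)] by (auto simp: arc_poly_def)
qed

definition A :: "'a set" where
  "A = {v \<in> V. side v}"

definition B :: "'a set" where
  "B = {v \<in> V. \<not> side v}"

definition partner :: "real \<Rightarrow> 'a" where
  "partner x = (THE a. a \<in> A \<and> x \<in> {lo a, hi a})"

text \<open>An endpoint \<open>x\<close> of a chord of \<open>B\<close> (with other endpoint \<open>y\<close>) that is also an endpoint of the
  chord \<open>a\<close> of \<open>A\<close> is pushed infinitesimally into \<open>a\<close> iff \<open>y\<close> lies outside \<open>a\<close> (if both chords
  coincide, the lower end is pushed in and the upper one out).  Either way the two chords, which
  meet, become interleaving.\<close>
definition shift :: "real \<Rightarrow> real \<Rightarrow> int" where
  "shift x y = (if \<exists>a\<in>A. x \<in> {lo a, hi a} then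
     (let a = partner x in
      if y \<in> {lo a, hi a} \<or> (lo a < y \<and> y < hi a) \<noteq> (x = lo a) then 1 else -1)
     else 0)"

definition L :: "'a \<Rightarrow> shifted" where
  "L v = Shifted (lo v) (if side v then 0 else shift (lo v) (hi v))"

definition R :: "'a \<Rightarrow> shifted" where
  "R v = Shifted (hi v) (if side v then 0 else shift (hi v) (lo v))"

lemma A_in_V: "a \<in> A \<Longrightarrow> a \<in> V \<and> side a" and B_in_V: "b \<in> B \<Longrightarrow> b \<in> V \<and> \<not> side b"
  unfolding A_def B_def by auto

lemma partner_eq:
  assumes "a \<in> A" "x \<in> {lo a, hi a}"
  shows "partner x = a"
  unfolding partner_def
proof (rule the_equality)
  fix a' assume "a' \<in> A \<and> x \<in> {lo a', hi a'}"
  then show "a' = a"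
    using same_side_separated[of a a'] assms A_in_V by (metis insertE singletonD)
qed (use assms in simp)

lemma shifted_inside_A:
  assumes a: "a \<in> A"
  shows "Shifted (lo a) 0 < Shifted z (shift z w) \<and> Shifted z (shift z w) < Shifted (hi a) 0 \<longleftrightarrow>
    (if z \<in> {lo a, hi a} then (if w \<in> {lo a, hi a} then z = lo a else \<not> (lo a < w \<and> w < hi a))
     else lo a < z \<and> z < hi a)"
proof (cases "z \<in> {lo a, hi a}")
  case False
  then show ?thesis using Shifted_less_Shifted_iff by auto
next
  case True
  have "lo a < hi a" using lo_less_hi A_in_V[OF a] by blast
  moreover have "shift z w = (if w \<in> {lo a, hi a} \<or> (lo a < w \<and> w < hi a) \<noteq> (z = lo a) then 1 else -1)"
    using a True partner_eq[OF a True] unfolding shift_def by auto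
  ultimately show ?thesis using True by auto
qed

lemma shift_nonzero: "a \<in> A \<Longrightarrow> x \<in> {lo a, hi a} \<Longrightarrow> shift x y \<noteq> 0"
  unfolding shift_def by (auto simp: Let_def)

lemma L_less_R: "v \<in> V \<Longrightarrow> L v < R v"
  using lo_less_hi by (simp add: L_def R_def)

lemma endpoints_distinct:
  assumes "u \<in> V" "v \<in> V" "u \<noteq> v"
  shows "L u \<noteq> L v \<and> L u \<noteq> R v \<and> R u \<noteq> R v \<and> R u \<noteq> L v"
proof (cases "side u = side v")
  case True
  then show ?thesis using same_side_separated[OF assms] by (auto simp: L_def R_def)
next
  case False
  have "L a \<noteq> L b \<and> L a \<noteq> R b \<and> R a \<noteq> R b \<and> R a \<noteq> L b" if "a \<in> A" "b \<in> B" for a b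
    using shift_nonzero[OF that(1)] A_in_V[OF that(1)] B_in_V[OF that(2)] by (auto simp: L_def R_def)
  from this[of u v] this[of v u] show ?thesis
    using False assms by (cases "side u") (auto simp: A_def B_def)
qed

lemma same_side_not_crosses:
  assumes "u \<in> V" "v \<in> V" "side u = side v"
  shows "\<not> crosses (L u, R u) (L v, R v)"
proof (cases "u = v")
  case False
  note sep = same_side_separated[OF assms(1,2) False assms(3)]
  have "L u < L v \<longleftrightarrow> lo u < lo v" "L v < R u \<longleftrightarrow> lo v < hi u" "R u < R v \<longleftrightarrow> hi u < hi v"
    unfolding L_def R_def using sep(1-4) by (auto intro!: Shifted_less_Shifted_iff)
  then show ?thesis
    using sep(5) lo_less_hi[OF assms(2)] by (auto simp: crosses_def)
qed (simp add: crosses_def)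

lemma E_iff_interleave:
  assumes a: "a \<in> A" and b: "b \<in> B"
  shows "E a b \<longleftrightarrow> interleave (L a, R a) (L b, R b)"
proof -
  have aV: "a \<in> V" "side a" and bV: "b \<in> V" "\<not> side b" using A_in_V[OF a] B_in_V[OF b] by auto
  then have "a \<noteq> b" by auto
  have la: "lo a < hi a" and lb: "lo b < hi b" using lo_less_hi aV bV by auto
  have sign: "g1 * g2 \<le> 0 \<longleftrightarrow> g1 = 0 \<or> g2 = 0 \<or> (g1 < 0) \<noteq> (g2 < 0)" for g1 g2 :: real
    by (auto simp: mult_le_0_iff)
  have zero: "arc_poly a x = 0 \<longleftrightarrow> x \<in> {lo a, hi a}" for x
    by (auto simp: arc_poly_def)
  have "interleave (L a, R a) (L b, R b) \<longleftrightarrow> (L a < L b \<and> L b < R a) \<noteq> (L a < R b \<and> R b < R a)"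
    using endpoints_distinct[OF aV(1) bV(1) \<open>a \<noteq> b\<close>] L_less_R aV bV
    by (intro interleave_iff_exactly_one_inside) auto
  also have "\<dots> \<longleftrightarrow>
      (if lo b \<in> {lo a, hi a} then (if hi b \<in> {lo a, hi a} then lo b = lo a else \<not> (lo a < hi b \<and> hi b < hi a))
       else lo a < lo b \<and> lo b < hi a) \<noteq>
      (if hi b \<in> {lo a, hi a} then (if lo b \<in> {lo a, hi a} then hi b = lo a else \<not> (lo a < lo b \<and> lo b < hi a))
       else lo a < hi b \<and> hi b < hi a)"
    using aV bV shifted_inside_A[OF a, of "lo b" "hi b"] shifted_inside_A[OF a, of "hi b" "lo b"] lb
    by (simp add: L_def R_def)
  also have "\<dots> \<longleftrightarrow> arc_poly a (lo b) * arc_poly a (hi b) \<le> 0"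
    unfolding sign zero arc_poly_neg_iff[OF aV(1)] using la lb by auto
  also have "\<dots> \<longleftrightarrow> E a b" using E_iff_arc_poly[OF aV(1) bV(1) \<open>a \<noteq> b\<close>] by simp
  finally show ?thesis by simp
qed

lemma laminar_pair_A_B: "laminar_pair A B L R"
proof
  show "finite A" "finite B" using finite_V by (simp_all add: A_def B_def)
  show "A \<inter> B = {}" by (auto simp: A_def B_def)
  show "L v < R v" if "v \<in> A \<union> B" for v using that L_less_R by (auto simp: A_def B_def)
  show "L u \<noteq> L v \<and> L u \<noteq> R v \<and> R u \<noteq> R v" if "u \<in> A \<union> B" "v \<in> A \<union> B" "u \<noteq> v" for u v
    using that endpoints_distinct by (auto simp: A_def B_def)
  show "\<not> crosses (L u, R u) (L v, R v)" if "u \<in> A" "v \<in> A" for u v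
    using that same_side_not_crosses by (auto simp: A_def)
  show "\<not> crosses (L u, R u) (L v, R v)" if "u \<in> B" "v \<in> B" for u v
    using that same_side_not_crosses by (auto simp: B_def)
qed

lemma E_commute: "E u v \<longleftrightarrow> E v u"
  using E_in_V E_iff_chords_meet by (metis Int_commute)

theorem exists_odd_coloring: "\<exists>col. odd_coloring V E 32 col"
proof -
  have "V = A \<union> B" by (auto simp: A_def B_def)
  moreover have "E u v \<longleftrightarrow> (u \<in> A \<and> v \<in> B \<or> u \<in> B \<and> v \<in> A) \<and> interleave (L u, R u) (L v, R v)"
    for u v
  proof (cases "u \<in> A \<and> v \<in> B \<or> u \<in> B \<and> v \<in> A")
    case True
    then show ?thesis using E_iff_interleave E_commute interleave_commute by blast
  next
    case False
    then show ?thesis using E_in_V side_differs by (auto simp: A_def B_def)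
  qed
  ultimately show ?thesis using laminar_pair.odd_coloring_interleaving_graph[OF laminar_pair_A_B] by metis
qed

end

theorem corollary1p6:
  fixes V :: "'a set" and E :: "'a \<Rightarrow> 'a \<Rightarrow> bool"
  assumes "simple_graph V E" and "circle_graph V E" and "bipartite V E"
  shows "odd_chromatic_number V E \<le> 98"
proof -
  obtain p q :: "'a \<Rightarrow> complex" where
    chords: "\<forall>v\<in>V. cmod (p v) = 1 \<and> cmod (q v) = 1 \<and> p v \<noteq> q v"
      "\<forall>u\<in>V. \<forall>v\<in>V. u \<noteq> v \<longrightarrow>
        (E u v \<longleftrightarrow> closed_segment (p u) (q u) \<inter> closed_segment (p v) (q v) \<noteq> {})"
    using assms(2) unfolding circle_graph_def by blast
  obtain side :: "'a \<Rightarrow> bool" where "\<forall>u\<in>V. \<forall>v\<in>V. E u v \<longrightarrow> side u \<noteq> side v"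
    using assms(3) unfolding bipartite_def by blast
  then interpret bipartite_chord_diagram V E p q side
    using assms(1) chords unfolding simple_graph_def by unfold_locales blast+
  obtain col where "odd_coloring V E 32 col"
    using exists_odd_coloring by blast
  then have "odd_chromatic_number V E \<le> 32"
    unfolding odd_chromatic_number_def by (intro Least_le) blast
  then show ?thesis by simp
qed

end
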